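(* Let $\omega=t_1\pi_1+\dots+t_m\pi_m$ be a formal real linear combination of $k$-permutations. If $\sum_{i\in[m]}t_iP_{\pi_i}=0$, then the cover matrix $\mathrm{Cov}(\omega)$ is constant (all its entries are equal).
   Context: A $k$-permutation is a bijection of $[k]=\{1,\dots,k\}$. The gradient polynomial of a $k$-permutation $\pi$ is $P_\pi(\alpha,\beta)=k!\sum_{m\in[k]}\left(\frac{k-m}{1-\alpha}-\frac{m-1}{\alpha}\right)\left(\frac{k-\pi(m)}{1-\beta}-\frac{\pi(m)-1}{\beta}\right)\frac{\alpha^{m-1}(1-\alpha)^{k-m}\beta^{\pi(m)-1}(1-\beta)^{k-\pi(m)}}{(m-1)!(k-m)!(\pi(m)-1)!(k-\pi(m))!}$. The permutation matrix $A_\pi\in\mathbb{R}^{k\times k}$ has $(A_\pi)_{i,j}=1$ if $\pi(i)=j$ and $0$ otherwise, and the cover matrix of $\omega=\sum_i t_i\pi_i$ is $\mathrm{Cov}(\omega)=\sum_i t_iA_{\pi_i}$. *)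

theory Defs
  imports Complex_Main "HOL-Combinatorics.Permutations"
begin

definition kperm :: "nat \<Rightarrow> (nat \<Rightarrow> nat) \<Rightarrow> bool" where
  "kperm k p \<longleftrightarrow> p permutes {1..k}"

text \<open>Gradient polynomial of a k-permutation, as written in the paper
  (as a real function of alpha, beta; meaningful for 0 < alpha, beta < 1).\<close>

definition grad_poly :: "nat \<Rightarrow> (nat \<Rightarrow> nat) \<Rightarrow> real \<Rightarrow> real \<Rightarrow> real" where
  "grad_poly k p \<alpha> \<beta> = fact k * (\<Sum>m\<in>{1..k}.
      (real (k - m) / (1 - \<alpha>) - real (m - 1) / \<alpha>) *
      (real (k - p m) / (1 - \<beta>) - real (p m - 1) / \<beta>) *
      (\<alpha> ^ (m - 1) * (1 - \<alpha>) ^ (k - m) * \<beta> ^ (p m - 1) * (1 - \<beta>) ^ (k - p m)) /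
      (fact (m - 1) * fact (k - m) * fact (p m - 1) * fact (k - p m)))"

definition perm_matrix :: "(nat \<Rightarrow> nat) \<Rightarrow> nat \<Rightarrow> nat \<Rightarrow> real" where
  "perm_matrix p i j = (if p i = j then 1 else 0)"

definition cover_matrix :: "nat \<Rightarrow> (nat \<Rightarrow> real) \<Rightarrow> (nat \<Rightarrow> nat \<Rightarrow> nat) \<Rightarrow> nat \<Rightarrow> nat \<Rightarrow> real" where
  "cover_matrix n t \<pi> i j = (\<Sum>l\<in>{1..n}. t l * perm_matrix (\<pi> l) i j)"

end

theory Submission
  imports Defs
begin

text \<open>Substituting \<open>\<alpha> = x/(1+x)\<close> and \<open>\<beta> = y/(1+y)\<close> turns each factor of the gradient
  polynomial into a polynomial \<open>g\<^sub>m(x) = ((k-m)x - (m-1)) x\<^sup>m\<^sup>-\<^sup>1 / ((m-1)! (k-m)!)\<close>, up to a common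
  nonzero factor. The hypothesis therefore says that the bilinear form
  \<open>\<Sum>\<^sub>i\<^sub>,\<^sub>j Cov\<^sub>i\<^sub>j g\<^sub>i(x) g\<^sub>j(y)\<close> vanishes for all \<open>x, y > 0\<close>. The \<open>g\<^sub>m\<close> telescope: the coefficient
  of \<open>x\<^sup>r\<close> in \<open>\<Sum>\<^sub>m v\<^sub>m g\<^sub>m(x)\<close> is \<open>(v\<^sub>r - v\<^sub>r\<^sub>+\<^sub>1) / ((r-1)! (k-r-1)!)\<close>, so such a combination
  vanishes only for constant \<open>v\<close>. Applied in both variables this gives
  \<open>Cov\<^sub>i\<^sub>j = Cov\<^sub>i\<^sub>1 + Cov\<^sub>1\<^sub>j - Cov\<^sub>1\<^sub>1\<close>, and since every row and column sum of the cover matrix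
  equals \<open>\<Sum>\<^sub>l t\<^sub>l\<close>, the matrix is constant.\<close>

lemma polyfun_eq_0_on_positive:
  fixes c :: "nat \<Rightarrow> real"
  assumes "\<forall>x>0. (\<Sum>i\<le>n. c i * x ^ i) = 0" and "i \<le> n"
  shows "c i = 0"
proof (rule ccontr)
  assume "c i \<noteq> 0"
  then have "finite {x. (\<Sum>i\<le>n. c i * x ^ i) = 0}"
    using polyfun_roots_finite \<open>i \<le> n\<close> by blast
  moreover have "{0<..} \<subseteq> {x. (\<Sum>i\<le>n. c i * x ^ i) = 0}"
    using assms(1) by auto
  ultimately show False
    using finite_subset infinite_Ioi by blast
qed

definition grad_basis :: "nat \<Rightarrow> nat \<Rightarrow> real \<Rightarrow> real" where
  "grad_basis k m x = (real (k - m) * x - real (m - 1)) * x ^ (m - 1) / (fact (m - 1) * fact (k - m))"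

definition grad_basis_coeff :: "nat \<Rightarrow> nat \<Rightarrow> real" where
  "grad_basis_coeff k r = (if 1 \<le> r \<and> r < k then 1 / (fact (r - 1) * fact (k - r - 1)) else 0)"

lemma grad_basis_telescope:
  assumes "m \<in> {1..k}"
  shows "grad_basis k m x
    = grad_basis_coeff k m * x ^ m - grad_basis_coeff k (m - 1) * x ^ (m - 1)"
proof -
  have left: "real (k - m) * x ^ m / (fact (m - 1) * fact (k - m)) = grad_basis_coeff k m * x ^ m"
  proof (cases "m < k")
    case True
    then have "fact (k - m) = (real (k - m) * fact (k - m - 1) :: real)"
      by (simp add: fact_reduce)
    with True assms show ?thesis
      by (simp add: grad_basis_coeff_def)
  qed (use assms in \<open>simp add: grad_basis_coeff_def\<close>)
  have right: "real (m - 1) * x ^ (m - 1) / (fact (m - 1) * fact (k - m))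
      = grad_basis_coeff k (m - 1) * x ^ (m - 1)"
  proof (cases "m \<ge> 2")
    case True
    then have "1 \<le> m - 1 \<and> m - 1 < k" and "k - (m - 1) - 1 = k - m"
      using assms by auto
    moreover have "fact (m - 1) = (real (m - 1) * fact (m - 1 - 1) :: real)"
      using True by (simp add: fact_reduce)
    ultimately show ?thesis
      using True by (simp add: grad_basis_coeff_def del: of_nat_diff)
  qed (use assms in \<open>simp add: grad_basis_coeff_def\<close>)
  have "x ^ m = x * x ^ (m - 1)"
    using assms by (cases m) auto
  then have "grad_basis k m x = real (k - m) * x ^ m / (fact (m - 1) * fact (k - m))
      - real (m - 1) * x ^ (m - 1) / (fact (m - 1) * fact (k - m))"
    unfolding grad_basis_def by (simp add: field_simps)
  then show ?thesis
    unfolding left right .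
qed

lemma sum_grad_basis_eq_polyfun:
  fixes v :: "nat \<Rightarrow> real"
  shows "(\<Sum>m\<in>{1..k}. v m * grad_basis k m x)
    = (\<Sum>r\<le>k. (v r - v (Suc r)) * grad_basis_coeff k r * x ^ r)"
proof -
  let ?e = "\<lambda>r. grad_basis_coeff k r * x ^ r"
  have e0: "?e 0 = 0" and ek: "?e k = 0"
    by (simp_all add: grad_basis_coeff_def)
  have "(\<Sum>m\<in>{1..k}. v m * ?e m) = (\<Sum>r\<le>k. v r * ?e r)"
    using e0 by (simp add: atMost_atLeast0 sum.atLeast_Suc_atMost)
  moreover have "(\<Sum>m\<in>{1..k}. v m * ?e (m - 1)) = (\<Sum>r\<le>k. v (Suc r) * ?e r)"
  proof (cases k)
    case (Suc K)
    have "(\<Sum>m\<in>{1..k}. v m * ?e (m - 1)) = (\<Sum>r\<le>K. v (Suc r) * ?e r)"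
      using sum.shift_bounds_cl_Suc_ivl[of "\<lambda>m. v m * ?e (m - 1)" 0 K]
      by (simp add: Suc atMost_atLeast0)
    also have "\<dots> = (\<Sum>r\<le>k. v (Suc r) * ?e r)"
      using ek by (simp add: Suc)
    finally show ?thesis .
  qed (simp add: grad_basis_coeff_def)
  moreover have "(\<Sum>m\<in>{1..k}. v m * grad_basis k m x)
      = (\<Sum>m\<in>{1..k}. v m * ?e m) - (\<Sum>m\<in>{1..k}. v m * ?e (m - 1))"
    unfolding sum_subtractf[symmetric]
    by (rule sum.cong) (simp_all add: grad_basis_telescope right_diff_distrib)
  ultimately show ?thesis
    by (simp add: sum_subtractf[symmetric] left_diff_distrib mult.assoc)
qed

lemma grad_basis_combination_zero_imp_const:
  fixes v :: "nat \<Rightarrow> real"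
  assumes zero: "\<forall>x>0. (\<Sum>m\<in>{1..k}. v m * grad_basis k m x) = 0" and "m \<in> {1..k}"
  shows "v m = v 1"
proof -
  have consecutive: "v r = v (Suc r)" if "1 \<le> r" "r < k" for r
  proof -
    have "\<forall>x>0. (\<Sum>r\<le>k. (v r - v (Suc r)) * grad_basis_coeff k r * x ^ r) = 0"
      using zero unfolding sum_grad_basis_eq_polyfun .
    then have "(v r - v (Suc r)) * grad_basis_coeff k r = 0"
      by (rule polyfun_eq_0_on_positive) (use \<open>r < k\<close> in simp)
    with that show ?thesis
      by (simp add: grad_basis_coeff_def)
  qed
  have "1 \<le> m" "m \<le> k"
    using assms(2) by auto
  then show ?thesis
  proof (induction m rule: dec_induct)
    case (step r)
    then have "r < k"
      by simp
    with step show ?case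
      using consecutive[of r] by simp
  qed simp
qed

text \<open>Minus the derivative of the scaled Bernstein polynomial
  \<open>\<alpha>\<^sup>m\<^sup>-\<^sup>1 (1-\<alpha>)\<^sup>k\<^sup>-\<^sup>m / ((m-1)! (k-m)!)\<close>.\<close>

definition grad_factor :: "nat \<Rightarrow> nat \<Rightarrow> real \<Rightarrow> real" where
  "grad_factor k m \<alpha> = (real (k - m) / (1 - \<alpha>) - real (m - 1) / \<alpha>) *
      (\<alpha> ^ (m - 1) * (1 - \<alpha>) ^ (k - m)) / (fact (m - 1) * fact (k - m))"

lemma grad_poly_eq_sum_grad_factor:
  "grad_poly k p \<alpha> \<beta> = fact k * (\<Sum>m\<in>{1..k}. grad_factor k m \<alpha> * grad_factor k (p m) \<beta>)"
  unfolding grad_poly_def grad_factor_def by (simp add: divide_inverse mult_ac)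

lemma grad_factor_substitution:
  fixes x :: real
  assumes "x > 0" and "m \<in> {1..k}"
  shows "grad_factor k m (x / (1 + x)) = (1 + x) / (x * (1 + x) ^ (k - 1)) * grad_basis k m x"
proof -
  have "1 - x / (1 + x) = 1 / (1 + x)"
    using assms by (simp add: field_simps)
  moreover have "(1 + x) ^ (k - 1) = (1 + x) ^ (m - 1) * (1 + x) ^ (k - m)"
    using assms by (simp flip: power_add)
  ultimately show ?thesis
    using assms unfolding grad_factor_def grad_basis_def
    by (simp add: field_simps power_divide)
qed

lemma sum_perm_matrix_row:
  assumes "p i \<in> A" and "finite A"
  shows "(\<Sum>j\<in>A. perm_matrix p i j * f j) = f (p i)"
proof -
  have "(\<Sum>j\<in>A. perm_matrix p i j * f j) = (\<Sum>j\<in>A. if p i = j then f j else 0)"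
    by (rule sum.cong) (simp_all add: perm_matrix_def)
  with assms show ?thesis
    by simp
qed

lemma sum_perm_matrix_col:
  assumes "p permutes A" and "j \<in> A" and "finite A"
  shows "(\<Sum>i\<in>A. perm_matrix p i j) = 1"
proof -
  have "(\<Sum>i\<in>A. perm_matrix p i j) = (\<Sum>i\<in>A. (\<lambda>i'. if i' = j then 1 else 0) (p i))"
    unfolding perm_matrix_def by simp
  also have "\<dots> = (\<Sum>i'\<in>A. if i' = j then 1 else 0)"
    using sum.permute[OF assms(1), of "\<lambda>i'. if i' = j then (1::real) else 0"] by (simp add: comp_def)
  also have "\<dots> = 1"
    using assms(2,3) by simp
  finally show ?thesis .
qed

lemma cover_matrix_row_sum:
  assumes "\<forall>l\<in>{1..n}. \<pi> l permutes {1..k}" and "i \<in> {1..k}"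
  shows "(\<Sum>j\<in>{1..k}. cover_matrix n t \<pi> i j) = (\<Sum>l\<in>{1..n}. t l)"
proof -
  have "(\<Sum>j\<in>{1..k}. cover_matrix n t \<pi> i j) = (\<Sum>l\<in>{1..n}. t l * (\<Sum>j\<in>{1..k}. perm_matrix (\<pi> l) i j))"
    unfolding cover_matrix_def sum_distrib_left by (rule sum.swap)
  also have "\<dots> = (\<Sum>l\<in>{1..n}. t l)"
  proof (rule sum.cong[OF refl])
    fix l
    assume "l \<in> {1..n}"
    then have "\<pi> l permutes {1..k}"
      using assms(1) by blast
    then have "\<pi> l i \<in> {1..k}"
      using assms(2) by (simp only: permutes_in_image)
    then show "t l * (\<Sum>j\<in>{1..k}. perm_matrix (\<pi> l) i j) = t l"
      using sum_perm_matrix_row[of "\<pi> l" i "{1..k}" "\<lambda>_. 1"] by simp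
  qed
  finally show ?thesis .
qed

lemma cover_matrix_col_sum:
  assumes "\<forall>l\<in>{1..n}. \<pi> l permutes {1..k}" and "j \<in> {1..k}"
  shows "(\<Sum>i\<in>{1..k}. cover_matrix n t \<pi> i j) = (\<Sum>l\<in>{1..n}. t l)"
proof -
  have "(\<Sum>i\<in>{1..k}. cover_matrix n t \<pi> i j) = (\<Sum>l\<in>{1..n}. t l * (\<Sum>i\<in>{1..k}. perm_matrix (\<pi> l) i j))"
    unfolding cover_matrix_def sum_distrib_left by (rule sum.swap)
  also have "\<dots> = (\<Sum>l\<in>{1..n}. t l)"
    using assms by (simp add: sum_perm_matrix_col)
  finally show ?thesis .
qed

lemma cover_matrix_bilinear:
  assumes perms: "\<forall>l\<in>{1..n}. \<pi> l permutes {1..k}"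
  shows "(\<Sum>i\<in>{1..k}. \<Sum>j\<in>{1..k}. cover_matrix n t \<pi> i j * f i j)
    = (\<Sum>l\<in>{1..n}. t l * (\<Sum>i\<in>{1..k}. f i (\<pi> l i)))"
proof -
  have "(\<Sum>i\<in>{1..k}. \<Sum>j\<in>{1..k}. cover_matrix n t \<pi> i j * f i j)
      = (\<Sum>i\<in>{1..k}. \<Sum>l\<in>{1..n}. t l * (\<Sum>j\<in>{1..k}. perm_matrix (\<pi> l) i j * f i j))"
    unfolding cover_matrix_def sum_distrib_right sum_distrib_left mult.assoc
    by (rule sum.cong[OF refl], rule sum.swap)
  also have "\<dots> = (\<Sum>i\<in>{1..k}. \<Sum>l\<in>{1..n}. t l * f i (\<pi> l i))"
  proof (intro sum.cong refl)
    fix i l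
    assume "i \<in> {1..k}" "l \<in> {1..n}"
    with perms have "\<pi> l i \<in> {1..k}"
      by (meson permutes_in_image)
    then show "t l * (\<Sum>j\<in>{1..k}. perm_matrix (\<pi> l) i j * f i j) = t l * f i (\<pi> l i)"
      by (simp add: sum_perm_matrix_row)
  qed
  also have "\<dots> = (\<Sum>l\<in>{1..n}. t l * (\<Sum>i\<in>{1..k}. f i (\<pi> l i)))"
    unfolding sum_distrib_left by (rule sum.swap)
  finally show ?thesis .
qed

lemma grad_poly_substitution:
  fixes x y :: real
  assumes perm: "p permutes {1..k}" and "x > 0" and "y > 0"
  shows "grad_poly k p (x / (1 + x)) (y / (1 + y))
    = fact k * ((1 + x) / (x * (1 + x) ^ (k - 1))) * ((1 + y) / (y * (1 + y) ^ (k - 1))) *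
      (\<Sum>i\<in>{1..k}. grad_basis k i x * grad_basis k (p i) y)"
proof -
  have "grad_factor k i (x / (1 + x)) * grad_factor k (p i) (y / (1 + y))
      = (1 + x) / (x * (1 + x) ^ (k - 1)) * ((1 + y) / (y * (1 + y) ^ (k - 1))) *
        (grad_basis k i x * grad_basis k (p i) y)"
    if i: "i \<in> {1..k}" for i
  proof -
    from perm i have "p i \<in> {1..k}"
      by (simp only: permutes_in_image)
    with i assms(2,3) show ?thesis
      by (simp add: grad_factor_substitution)
  qed
  then show ?thesis
    unfolding grad_poly_eq_sum_grad_factor by (simp add: sum_distrib_left mult.assoc)
qed

lemma cover_bilinear_form_eq_0:
  fixes x y :: real
  assumes perms: "\<forall>l\<in>{1..n}. \<pi> l permutes {1..k}"
    and zero: "\<forall>\<alpha> \<beta>. 0 < \<alpha> \<and> \<alpha> < 1 \<and> 0 < \<beta> \<and> \<beta> < 1 \<longrightarrow>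
                 (\<Sum>l\<in>{1..n}. t l * grad_poly k (\<pi> l) \<alpha> \<beta>) = 0"
    and "x > 0" and "y > 0"
  shows "(\<Sum>i\<in>{1..k}. \<Sum>j\<in>{1..k}. cover_matrix n t \<pi> i j * (grad_basis k i x * grad_basis k j y)) = 0"
proof -
  define w where "w z = (1 + z) / (z * (1 + z) ^ (k - 1))" for z :: real
  have "0 = (\<Sum>l\<in>{1..n}. t l * grad_poly k (\<pi> l) (x / (1 + x)) (y / (1 + y)))"
    using zero assms(3,4) by simp
  also have "\<dots> = (\<Sum>l\<in>{1..n}. fact k * w x * w y *
      (t l * (\<Sum>i\<in>{1..k}. grad_basis k i x * grad_basis k (\<pi> l i) y)))"
    using perms assms(3,4) by (intro sum.cong refl) (simp add: grad_poly_substitution w_def)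
  also have "\<dots> = fact k * w x * w y *
      (\<Sum>i\<in>{1..k}. \<Sum>j\<in>{1..k}. cover_matrix n t \<pi> i j * (grad_basis k i x * grad_basis k j y))"
    unfolding cover_matrix_bilinear[OF perms] sum_distrib_left ..
  finally show ?thesis
    using assms(3,4) by (simp add: w_def)
qed

lemma grad_basis_bilinear_zero_imp_additive:
  fixes C :: "nat \<Rightarrow> nat \<Rightarrow> real"
  assumes zero: "\<forall>x>0. \<forall>y>0. (\<Sum>i\<in>{1..k}. \<Sum>j\<in>{1..k}. C i j * (grad_basis k i x * grad_basis k j y)) = 0"
    and "i \<in> {1..k}" and "j \<in> {1..k}"
  shows "C i j = C i 1 + C 1 j - C 1 1"
proof -
  have "(\<Sum>i\<in>{1..k}. C i j * grad_basis k i x) = (\<Sum>i\<in>{1..k}. C i 1 * grad_basis k i x)"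
    if "x > 0" for x
  proof -
    have "(\<Sum>j\<in>{1..k}. (\<Sum>i\<in>{1..k}. C i j * grad_basis k i x) * grad_basis k j y)
        = (\<Sum>i\<in>{1..k}. \<Sum>j\<in>{1..k}. C i j * (grad_basis k i x * grad_basis k j y))" for y
      unfolding sum_distrib_right mult.assoc by (rule sum.swap)
    with zero that have "\<forall>y>0. (\<Sum>j\<in>{1..k}. (\<Sum>i\<in>{1..k}. C i j * grad_basis k i x) * grad_basis k j y) = 0"
      by simp
    from grad_basis_combination_zero_imp_const[OF this assms(3)] show ?thesis .
  qed
  then have "\<forall>x>0. (\<Sum>i\<in>{1..k}. (C i j - C i 1) * grad_basis k i x) = 0"
    by (simp add: left_diff_distrib sum_subtractf)
  from grad_basis_combination_zero_imp_const[OF this assms(2)] show ?thesis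
    by simp
qed

lemma additive_matrix_const_if_line_sums_const:
  fixes C :: "nat \<Rightarrow> nat \<Rightarrow> real"
  assumes additive: "\<And>i j. i \<in> {1..k} \<Longrightarrow> j \<in> {1..k} \<Longrightarrow> C i j = C i 1 + C 1 j - C 1 1"
    and rows: "\<And>i. i \<in> {1..k} \<Longrightarrow> (\<Sum>j\<in>{1..k}. C i j) = r"
    and cols: "\<And>j. j \<in> {1..k} \<Longrightarrow> (\<Sum>i\<in>{1..k}. C i j) = s"
    and i: "i \<in> {1..k}" and j: "j \<in> {1..k}"
  shows "C i j = C 1 1"
proof -
  have one: "1 \<in> {1..k}" and k: "real k \<noteq> 0"
    using i by auto
  have "(\<Sum>j\<in>{1..k}. C i j) = (\<Sum>j\<in>{1..k}. C 1 j + (C i 1 - C 1 1))"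
  proof (rule sum.cong[OF refl])
    fix j
    assume "j \<in> {1..k}"
    from additive[OF i this] show "C i j = C 1 j + (C i 1 - C 1 1)"
      by simp
  qed
  with rows[OF i] rows[OF one] k have row: "C i 1 = C 1 1"
    by (simp add: sum.distrib)
  have "(\<Sum>i\<in>{1..k}. C i j) = (\<Sum>i\<in>{1..k}. C i 1 + (C 1 j - C 1 1))"
  proof (rule sum.cong[OF refl])
    fix i
    assume "i \<in> {1..k}"
    from additive[OF this j] show "C i j = C i 1 + (C 1 j - C 1 1)"
      by simp
  qed
  with cols[OF j] cols[OF one] k have col: "C 1 j = C 1 1"
    by (simp add: sum.distrib)
  show ?thesis
    using additive[OF i j] row col by simp
qed

theorem lemma10:
  fixes k n :: nat and t :: "nat \<Rightarrow> real" and \<pi> :: "nat \<Rightarrow> nat \<Rightarrow> nat"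
  assumes perms: "\<forall>l\<in>{1..n}. kperm k (\<pi> l)"
    and zero: "\<forall>\<alpha> \<beta>. 0 < \<alpha> \<and> \<alpha> < 1 \<and> 0 < \<beta> \<and> \<beta> < 1 \<longrightarrow>
                 (\<Sum>l\<in>{1..n}. t l * grad_poly k (\<pi> l) \<alpha> \<beta>) = 0"
  shows "\<exists>c. \<forall>i\<in>{1..k}. \<forall>j\<in>{1..k}. cover_matrix n t \<pi> i j = c"
proof -
  have permutes: "\<forall>l\<in>{1..n}. \<pi> l permutes {1..k}"
    using perms unfolding kperm_def .
  have additive: "cover_matrix n t \<pi> i j
      = cover_matrix n t \<pi> i 1 + cover_matrix n t \<pi> 1 j - cover_matrix n t \<pi> 1 1"
    if "i \<in> {1..k}" "j \<in> {1..k}" for i j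
    using cover_bilinear_form_eq_0[OF permutes zero] that
    by (intro grad_basis_bilinear_zero_imp_additive) auto
  have "cover_matrix n t \<pi> i j = cover_matrix n t \<pi> 1 1" if "i \<in> {1..k}" "j \<in> {1..k}" for i j
    using additive cover_matrix_row_sum[OF permutes] cover_matrix_col_sum[OF permutes] that
    by (rule additive_matrix_const_if_line_sums_const)
  then show ?thesis
    by blast
qed

end
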